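(* Let $f\in E^{\nu}_{p,q}$ with $p\ge1$, $q\ge2$, written in the corresponding coordinates $x=(\xi,\eta,x_n)$ as $f=x_n^4+2(|\xi|^2-3|\eta|^2)x_n^2+8\xi^\top A_\eta\xi\, x_n+\theta(\xi,\eta)$, and let $\theta_3$ be the part of $\theta$ that is homogeneous of degree $3$ in $\xi$ and degree $1$ in $\eta$. Then $$\Delta_x f=4(p-3q+3)(x_n^2+|\xi|^2)+4(8\nu-1+q-3p)|\eta|^2+\Delta_\xi\theta_3,$$ where $\Delta_\xi$ is the Laplacian in the $\xi$-variables.
   Context: $f$ is a real homogeneous quartic on $\mathbb{R}^n$ with $|\nabla_x f|^2=16|x|^6$. We say $f\in E^{\nu}_{p,q}$ if there are orthonormal coordinates $x=(\xi,\eta,x_n)$, $\xi\in\mathbb{R}^p$, $\eta\in\mathbb{R}^q$, $p+q=n-1$, in which $f(x)=x_n^4+2(|\xi|^2-3|\eta|^2)x_n^2+8\psi(\xi,\eta)x_n+\theta(\xi,\eta)$ with $\theta$ a homogeneous quartic, $\psi(\xi,\eta)=\xi^\top A_\eta\xi$ where $A_\eta=\sum_{i=1}^q\eta_iA_i$ for symmetric $A_i\in\mathbb{R}^{p\times p}$, and for every $\eta\ne0$ the matrix $A_\eta$ is similar to $|\eta|\,\mathrm{diag}(\mathbf{1}_\nu,-\mathbf{1}_\nu,\mathbf{0}_{p-2\nu})$. *)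

theory Defs
  imports "HOL-Analysis.Analysis"
begin

definition dderiv :: "('a::real_normed_vector \<Rightarrow> real) \<Rightarrow> 'a \<Rightarrow> 'a \<Rightarrow> real" where
  "dderiv f v x = deriv (\<lambda>t. f (x + t *\<^sub>R v)) 0"

definition laplacian :: "('a::euclidean_space \<Rightarrow> real) \<Rightarrow> 'a \<Rightarrow> real" where
  "laplacian f x = (\<Sum>b\<in>Basis. dderiv (dderiv f b) b x)"

definition grad_norm2 :: "('a::euclidean_space \<Rightarrow> real) \<Rightarrow> 'a \<Rightarrow> real" where
  "grad_norm2 f x = (\<Sum>b\<in>Basis. (dderiv f b x)\<^sup>2)"

definition homogeneous_quartic :: "('a::euclidean_space \<Rightarrow> real) \<Rightarrow> bool" where
  "homogeneous_quartic f \<longleftrightarrow>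
     (\<exists>c :: 'a \<Rightarrow> 'a \<Rightarrow> 'a \<Rightarrow> 'a \<Rightarrow> real. \<forall>x.
        f x = (\<Sum>b1\<in>Basis. \<Sum>b2\<in>Basis. \<Sum>b3\<in>Basis. \<Sum>b4\<in>Basis.
                 c b1 b2 b3 b4 * (x \<bullet> b1) * (x \<bullet> b2) * (x \<bullet> b3) * (x \<bullet> b4)))"

definition similar_matrix :: "real^'n^'n \<Rightarrow> real^'n^'n \<Rightarrow> bool" where
  "similar_matrix A B \<longleftrightarrow> (\<exists>P. invertible P \<and> A = P ** B ** matrix_inv P)"

text \<open>A_eta is similar to |eta| diag(1_nu, -1_nu, 0_{p-2nu}); since the index type has no
  preferred ordering, the diagonal is given by a sign vector d with nu entries 1, nu entries -1
  and the remaining entries 0 (the order of diagonal entries is irrelevant up to similarity).\<close>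
definition sign_diag_similar :: "nat \<Rightarrow> real \<Rightarrow> real^'n^'n \<Rightarrow> bool" where
  "sign_diag_similar \<nu> r A \<longleftrightarrow>
     (\<exists>d :: 'n \<Rightarrow> real. (\<forall>i. d i \<in> {-1, 0, 1}) \<and>
        card {i. d i = 1} = \<nu> \<and> card {i. d i = -1} = \<nu> \<and>
        similar_matrix A (\<chi> i j. if i = j then r * d i else 0))"

end

theory Submission
  imports Defs "HOL-Computational_Algebra.Polynomial"
begin

text \<open>Along every line \<open>f\<close> is a polynomial, so all directional derivatives are read off
  from coefficients. In \<open>t = x\<^sub>n\<close> the eikonal equation \<open>|\<nabla>f|\<^sup>2 = 16|x|\<^sup>6\<close> is a
  polynomial identity; its \<open>t\<^sup>2\<close>-coefficient, combined with Euler's identity for the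
  bihomogeneous pieces \<open>\<theta>\<^sub>k\<close>, gives \<open>\<Sum>\<^sub>k (32k - 96) \<theta>\<^sub>k\<close> explicitly in terms of \<open>\<xi>, \<eta>\<close>
  and the \<open>A\<^sub>i\<close>. Scaling \<open>\<xi>\<close> separates the \<open>\<theta>\<^sub>k\<close>, so \<open>\<theta>\<close> is known up to \<open>\<theta>\<^sub>3\<close>.
  The Laplacian of the known part only involves \<open>tr A\<^sub>i = 0\<close> and
  \<open>tr A\<^sub>\<eta>\<^sup>2 = 2\<nu>|\<eta>|\<^sup>2\<close>, both read off from the similarity
  \<open>A\<^sub>\<eta> \<sim> |\<eta>| diag(1\<^sub>\<nu>, -1\<^sub>\<nu>, 0)\<close>; and \<open>\<theta>\<^sub>3\<close> is linear in \<open>\<eta>\<close>, so only its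
  \<open>\<xi>\<close>-Laplacian remains.\<close>

section \<open>Polynomials along lines\<close>

definition poly_on_lines :: "('a::real_vector \<Rightarrow> real) \<Rightarrow> bool" where
  "poly_on_lines g \<longleftrightarrow> (\<forall>x v. \<exists>P. \<forall>s. g (x + s *\<^sub>R v) = poly P s)"

definition dderiv2 :: "('a::real_normed_vector \<Rightarrow> real) \<Rightarrow> 'a \<Rightarrow> 'a \<Rightarrow> real" where
  "dderiv2 g v x = dderiv (dderiv g v) v x"

lemma laplacian_eq_sum_dderiv2: "laplacian g x = (\<Sum>b\<in>Basis. dderiv2 g b x)"
  by (simp add: laplacian_def dderiv2_def)

lemma line_poly_coeff0:
  assumes "\<And>s. g ((x::'a::real_vector) + s *\<^sub>R v) = poly P s"
  shows "g x = coeff P 0"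
  using assms[of 0] by (simp add: poly_0_coeff_0)

lemma dderiv_eq_coeff1:
  assumes "\<And>s. g (x + s *\<^sub>R v) = poly P s"
  shows "dderiv g v x = coeff P 1"
proof -
  have "(\<lambda>s. g (x + s *\<^sub>R v)) = poly P" using assms by auto
  hence "dderiv g v x = deriv (poly P) 0" by (simp add: dderiv_def)
  also have "\<dots> = poly (pderiv P) 0" by (rule DERIV_imp_deriv) simp
  also have "\<dots> = coeff P 1" by (simp add: poly_0_coeff_0 coeff_pderiv)
  finally show ?thesis .
qed

lemma dderiv2_eq_coeff2:
  assumes "\<And>s. g (x + s *\<^sub>R v) = poly P s"
  shows "dderiv2 g v x = 2 * coeff P 2"
proof -
  have along_line: "dderiv g v (x + u *\<^sub>R v) = poly (pderiv P) u" for u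
  proof -
    have "(\<lambda>s. g (x + u *\<^sub>R v + s *\<^sub>R v)) = (\<lambda>s. poly P (u + s))"
      using assms[of "u + _"] by (auto simp: algebra_simps scaleR_add_left)
    hence "dderiv g v (x + u *\<^sub>R v) = deriv (\<lambda>s. poly P (u + s)) 0" by (simp add: dderiv_def)
    also have "\<dots> = poly (pderiv P) u"
      by (rule DERIV_imp_deriv) (auto intro!: derivative_eq_intros)
    finally show ?thesis .
  qed
  have "dderiv2 g v x = deriv (poly (pderiv P)) 0"
    unfolding dderiv2_def dderiv_def[of "dderiv g v"] using along_line by (simp add: dderiv_def)
  also have "\<dots> = poly (pderiv (pderiv P)) 0" by (rule DERIV_imp_deriv) simp
  also have "\<dots> = 2 * coeff P 2" by (simp add: poly_0_coeff_0 coeff_pderiv numeral_2_eq_2)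
  finally show ?thesis .
qed

lemma poly_on_lines_binop:
  assumes "poly_on_lines g" "poly_on_lines h"
    and "\<And>P R s. op (poly P s) (poly R s) = poly (pop P R) s"
  shows "poly_on_lines (\<lambda>x. op (g x) (h x))"
  unfolding poly_on_lines_def
proof (intro allI)
  fix x v
  obtain P R where "\<And>s. g (x + s *\<^sub>R v) = poly P s" "\<And>s. h (x + s *\<^sub>R v) = poly R s"
    using assms(1,2) unfolding poly_on_lines_def by blast
  then show "\<exists>S. \<forall>s. op (g (x + s *\<^sub>R v)) (h (x + s *\<^sub>R v)) = poly S s"
    by (intro exI[of _ "pop P R"]) (simp add: assms(3))
qed

lemma poly_on_lines_const [simp]: "poly_on_lines (\<lambda>x. c)"
  unfolding poly_on_lines_def by (auto intro: exI[of _ "[:c:]"])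

lemma poly_on_lines_add [simp]: "poly_on_lines g \<Longrightarrow> poly_on_lines h \<Longrightarrow> poly_on_lines (\<lambda>x. g x + h x)"
  by (rule poly_on_lines_binop[where op = "(+)" and pop = "(+)"]) simp_all

lemma poly_on_lines_diff [simp]: "poly_on_lines g \<Longrightarrow> poly_on_lines h \<Longrightarrow> poly_on_lines (\<lambda>x. g x - h x)"
  by (rule poly_on_lines_binop[where op = "(-)" and pop = "(-)"]) simp_all

lemma poly_on_lines_mult [simp]: "poly_on_lines g \<Longrightarrow> poly_on_lines h \<Longrightarrow> poly_on_lines (\<lambda>x. g x * h x)"
  by (rule poly_on_lines_binop[where op = "(*)" and pop = "(*)"]) simp_all

lemma poly_on_lines_power [simp]: "poly_on_lines g \<Longrightarrow> poly_on_lines (\<lambda>x. g x ^ n)"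
proof (induction n)
  case (Suc n)
  then show ?case using poly_on_lines_mult[of g "\<lambda>x. g x ^ n"] by simp
qed simp

lemma poly_on_lines_sum [simp]:
  "(\<And>i. i \<in> I \<Longrightarrow> poly_on_lines (g i)) \<Longrightarrow> poly_on_lines (\<lambda>x. \<Sum>i\<in>I. g i x)"
proof (induction I rule: infinite_finite_induct)
  case (insert a F) thus ?case using poly_on_lines_add[of "g a" "\<lambda>x. \<Sum>i\<in>F. g i x"] by auto
qed auto

lemma linear_on_line: "linear l \<Longrightarrow> l (x + s *\<^sub>R v) = poly [:l x, l v:] s"
  by (simp add: linear_add linear_scale)

lemma poly_on_lines_linear [simp]: "linear l \<Longrightarrow> poly_on_lines l"
  unfolding poly_on_lines_def by (metis linear_on_line)

lemma poly_on_lines_affine_compose: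
  assumes "poly_on_lines g" "linear L"
  shows "poly_on_lines (\<lambda>y. g (c + L y))"
  unfolding poly_on_lines_def
proof (intro allI)
  fix x v
  obtain P where "\<And>s. g ((c + L x) + s *\<^sub>R L v) = poly P s"
    using assms(1) unfolding poly_on_lines_def by blast
  then show "\<exists>P. \<forall>s. g (c + L (x + s *\<^sub>R v)) = poly P s"
    using assms(2) by (auto simp: linear_add linear_scale add.assoc)
qed

lemma inner_linear_on_line:
  assumes "linear L1" "linear L2"
  shows "L1 (x + s *\<^sub>R v) \<bullet> L2 (x + s *\<^sub>R v)
           = poly [:L1 x \<bullet> L2 x, L1 x \<bullet> L2 v + L1 v \<bullet> L2 x, L1 v \<bullet> L2 v:] s"
  using assms by (simp add: linear_add linear_scale inner_add_left inner_add_right algebra_simps)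

lemma poly_on_lines_inner [simp]: "linear L1 \<Longrightarrow> linear L2 \<Longrightarrow> poly_on_lines (\<lambda>x. L1 x \<bullet> L2 x)"
  unfolding poly_on_lines_def by (metis inner_linear_on_line)

lemma dderiv_const [simp]: "dderiv (\<lambda>x. c) v x = 0"
  by (simp add: dderiv_def)

lemma dderiv2_const [simp]: "dderiv2 (\<lambda>x. c) v x = 0"
  by (simp add: dderiv2_def dderiv_def)

lemma dderiv_zero_direction [simp]: "dderiv g 0 x = 0"
  by (simp add: dderiv_def)

lemma dderiv2_zero_direction [simp]: "dderiv2 g 0 x = 0"
  by (simp add: dderiv2_def)

context
  fixes g h :: "'a::real_normed_vector \<Rightarrow> real"
  assumes g: "poly_on_lines g" and h: "poly_on_lines h"
begin

lemma dderiv_add [simp]: "dderiv (\<lambda>x. g x + h x) v x = dderiv g v x + dderiv h v x"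
proof -
  obtain P R where P: "\<And>s. g (x + s *\<^sub>R v) = poly P s" and R: "\<And>s. h (x + s *\<^sub>R v) = poly R s"
    using g h unfolding poly_on_lines_def by blast
  show ?thesis
    using dderiv_eq_coeff1[OF P] dderiv_eq_coeff1[OF R] dderiv_eq_coeff1[of "\<lambda>x. g x + h x" x v "P + R"] P R
    by simp
qed

lemma dderiv2_add [simp]: "dderiv2 (\<lambda>x. g x + h x) v x = dderiv2 g v x + dderiv2 h v x"
proof -
  obtain P R where P: "\<And>s. g (x + s *\<^sub>R v) = poly P s" and R: "\<And>s. h (x + s *\<^sub>R v) = poly R s"
    using g h unfolding poly_on_lines_def by blast
  show ?thesis
    using dderiv2_eq_coeff2[OF P] dderiv2_eq_coeff2[OF R] dderiv2_eq_coeff2[of "\<lambda>x. g x + h x" x v "P + R"] P R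
    by simp
qed

lemma dderiv_diff [simp]: "dderiv (\<lambda>x. g x - h x) v x = dderiv g v x - dderiv h v x"
proof -
  obtain P R where P: "\<And>s. g (x + s *\<^sub>R v) = poly P s" and R: "\<And>s. h (x + s *\<^sub>R v) = poly R s"
    using g h unfolding poly_on_lines_def by blast
  show ?thesis
    using dderiv_eq_coeff1[OF P] dderiv_eq_coeff1[OF R] dderiv_eq_coeff1[of "\<lambda>x. g x - h x" x v "P - R"] P R
    by simp
qed

lemma dderiv2_diff [simp]: "dderiv2 (\<lambda>x. g x - h x) v x = dderiv2 g v x - dderiv2 h v x"
proof -
  obtain P R where P: "\<And>s. g (x + s *\<^sub>R v) = poly P s" and R: "\<And>s. h (x + s *\<^sub>R v) = poly R s"
    using g h unfolding poly_on_lines_def by blast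
  show ?thesis
    using dderiv2_eq_coeff2[OF P] dderiv2_eq_coeff2[OF R] dderiv2_eq_coeff2[of "\<lambda>x. g x - h x" x v "P - R"] P R
    by (simp add: algebra_simps)
qed

lemma dderiv_mult [simp]: "dderiv (\<lambda>x. g x * h x) v x = g x * dderiv h v x + dderiv g v x * h x"
proof -
  obtain P R where P: "\<And>s. g (x + s *\<^sub>R v) = poly P s" and R: "\<And>s. h (x + s *\<^sub>R v) = poly R s"
    using g h unfolding poly_on_lines_def by blast
  show ?thesis
    using dderiv_eq_coeff1[OF P] dderiv_eq_coeff1[OF R] dderiv_eq_coeff1[of "\<lambda>x. g x * h x" x v "P * R"]
      line_poly_coeff0[OF P] line_poly_coeff0[OF R] P R
    by (simp add: coeff_mult)
qed

lemma dderiv2_mult [simp]: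
  "dderiv2 (\<lambda>x. g x * h x) v x = g x * dderiv2 h v x + 2 * dderiv g v x * dderiv h v x + dderiv2 g v x * h x"
proof -
  obtain P R where P: "\<And>s. g (x + s *\<^sub>R v) = poly P s" and R: "\<And>s. h (x + s *\<^sub>R v) = poly R s"
    using g h unfolding poly_on_lines_def by blast
  have "coeff (P * R) 2 = coeff P 0 * coeff R 2 + coeff P 1 * coeff R 1 + coeff P 2 * coeff R 0"
    by (simp add: coeff_mult numeral_2_eq_2 atMost_Suc)
  then show ?thesis
    using dderiv_eq_coeff1[OF P] dderiv_eq_coeff1[OF R] dderiv2_eq_coeff2[OF P] dderiv2_eq_coeff2[OF R]
      dderiv2_eq_coeff2[of "\<lambda>x. g x * h x" x v "P * R"] line_poly_coeff0[OF P] line_poly_coeff0[OF R] P R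
    by (simp add: algebra_simps)
qed

end

lemma dderiv_sum [simp]:
  "finite I \<Longrightarrow> (\<And>i. i \<in> I \<Longrightarrow> poly_on_lines (g i)) \<Longrightarrow>
     dderiv (\<lambda>x. \<Sum>i\<in>I. g i x) v x = (\<Sum>i\<in>I. dderiv (g i) v x)"
  by (induction I rule: finite_induct) simp_all

lemma dderiv2_sum [simp]:
  "finite I \<Longrightarrow> (\<And>i. i \<in> I \<Longrightarrow> poly_on_lines (g i)) \<Longrightarrow>
     dderiv2 (\<lambda>x. \<Sum>i\<in>I. g i x) v x = (\<Sum>i\<in>I. dderiv2 (g i) v x)"
  by (induction I rule: finite_induct) simp_all

lemma dderiv_power [simp]:
  "poly_on_lines g \<Longrightarrow> dderiv (\<lambda>x. g x ^ n) v x = of_nat n * g x ^ (n - 1) * dderiv g v x"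
proof (induction n)
  case (Suc n)
  then show ?case by (cases n) (simp_all add: algebra_simps)
qed simp

lemma dderiv2_power2 [simp]:
  "poly_on_lines g \<Longrightarrow> dderiv2 (\<lambda>x. g x ^ 2) v x = 2 * g x * dderiv2 g v x + 2 * (dderiv g v x)\<^sup>2"
  using dderiv2_mult[of g g v x] by (simp add: power2_eq_square algebra_simps)

lemma dderiv2_power4 [simp]:
  assumes "poly_on_lines g"
  shows "dderiv2 (\<lambda>x. g x ^ 4) v x = 4 * g x ^ 3 * dderiv2 g v x + 12 * (g x)\<^sup>2 * (dderiv g v x)\<^sup>2"
proof -
  have "dderiv2 (\<lambda>x. g x ^ 4) v x = dderiv2 (\<lambda>x. (g x ^ 2) ^ 2) v x"
    by (simp add: power_mult[symmetric])
  also have "\<dots> = 4 * g x ^ 3 * dderiv2 g v x + 12 * (g x)\<^sup>2 * (dderiv g v x)\<^sup>2"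
    using assms by (simp add: algebra_simps power2_eq_square power3_eq_cube)
  finally show ?thesis .
qed

lemma dderiv_linear [simp]:
  assumes "linear l"
  shows "dderiv l v x = l v"
  using dderiv_eq_coeff1[of l x v "[:l x, l v:]"] linear_on_line[OF assms] by simp

lemma dderiv2_linear [simp]:
  assumes "linear l"
  shows "dderiv2 l v x = 0"
  using dderiv2_eq_coeff2[of l x v "[:l x, l v:]"] linear_on_line[OF assms] by (simp add: numeral_2_eq_2)

context
  fixes L1 L2 :: "'a::real_normed_vector \<Rightarrow> 'b::real_inner"
  assumes L1: "linear L1" and L2: "linear L2"
begin

lemma dderiv_inner [simp]: "dderiv (\<lambda>x. L1 x \<bullet> L2 x) v x = L1 x \<bullet> L2 v + L1 v \<bullet> L2 x"
  by (subst dderiv_eq_coeff1[of _ x v], rule inner_linear_on_line[OF L1 L2]) simp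

lemma dderiv2_inner [simp]: "dderiv2 (\<lambda>x. L1 x \<bullet> L2 x) v x = 2 * (L1 v \<bullet> L2 v)"
  by (subst dderiv2_eq_coeff2[of _ x v], rule inner_linear_on_line[OF L1 L2]) (simp add: numeral_2_eq_2)

end

lemma dderiv_compose_linear: "linear L \<Longrightarrow> dderiv (\<lambda>x. g (L x)) v x = dderiv g (L v) (L x)"
  by (simp add: dderiv_def linear_add linear_scale)

lemma dderiv2_compose_affine:
  assumes "linear L"
  shows "dderiv2 (\<lambda>x. g (c + L x)) v x = dderiv2 g (L v) (c + L x)"
proof -
  have "dderiv (\<lambda>x. g (c + L x)) v (x + s *\<^sub>R v) = dderiv g (L v) (c + L x + s *\<^sub>R L v)" for s
    using assms by (simp add: dderiv_def linear_add linear_scale algebra_simps)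
  thus ?thesis by (simp add: dderiv2_def dderiv_def[of "dderiv _ _"])
qed

section \<open>Traces of sign-diagonal similarity classes\<close>

lemma invertible_matrix_inv:
  assumes "invertible (P::real^'n^'n)"
  shows "P ** matrix_inv P = mat 1" "matrix_inv P ** P = mat 1"
proof -
  have "\<exists>A'. P ** A' = mat 1 \<and> A' ** P = mat 1" using assms by (simp add: invertible_def)
  hence "P ** matrix_inv P = mat 1 \<and> matrix_inv P ** P = mat 1"
    unfolding matrix_inv_def by (rule someI_ex)
  thus "P ** matrix_inv P = mat 1" "matrix_inv P ** P = mat 1" by auto
qed

lemma similar_matrix_trace:
  assumes "similar_matrix A (B::real^'n^'n)"
  shows "trace A = trace B"
proof -
  obtain P where "invertible P" and A: "A = P ** B ** matrix_inv P"
    using assms unfolding similar_matrix_def by blast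
  then have "trace A = trace (matrix_inv P ** (P ** B))" using trace_mul_sym by metis
  also have "\<dots> = trace B" by (simp add: matrix_mul_assoc invertible_matrix_inv[OF \<open>invertible P\<close>])
  finally show ?thesis .
qed

lemma similar_matrix_square:
  assumes "similar_matrix A (B::real^'n^'n)"
  shows "similar_matrix (A ** A) (B ** B)"
proof -
  obtain P where P: "invertible P" and A: "A = P ** B ** matrix_inv P"
    using assms unfolding similar_matrix_def by blast
  have "A ** A = P ** (B ** B) ** matrix_inv P"
    by (simp add: A matrix_mul_assoc)
      (metis invertible_matrix_inv(2)[OF P] matrix_mul_assoc matrix_mul_rid)
  with P show ?thesis unfolding similar_matrix_def by blast
qed

lemma trace_diagonal: "trace (\<chi> i j. if i = j then c i else 0 :: real^'n^'n) = (\<Sum>i\<in>UNIV. c i)"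
  by (simp add: trace_def)

lemma diagonal_square:
  "(\<chi> i j. if i = j then c i else 0 :: real^'n^'n) ** (\<chi> i j. if i = j then c i else 0)
     = (\<chi> i j. if i = j then c i * c i else 0)"
proof -
  have "(if i = k then c i else 0) * (if k = j then c k else 0)
          = (if k = i then (if i = j then c i * c i else 0) else 0)" for i j k
    by auto
  then show ?thesis by (simp add: vec_eq_iff matrix_matrix_mult_def)
qed

lemma trace_sign_diag_similar:
  fixes B :: "real^'n^'n"
  assumes "sign_diag_similar \<nu> r B"
  shows "trace B = 0" "trace (B ** B) = 2 * real \<nu> * r\<^sup>2"
proof -
  obtain d :: "'n \<Rightarrow> real" where d: "\<forall>i. d i \<in> {-1, 0, 1}" "card {i. d i = 1} = \<nu>" "card {i. d i = -1} = \<nu>"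
     and sim: "similar_matrix B (\<chi> i j. if i = j then r * d i else 0)"
    using assms unfolding sign_diag_similar_def by blast
  have count: "(\<Sum>i\<in>UNIV. if d i = c then 1 else 0) = real \<nu>" if "c = 1 \<or> c = -1" for c :: real
    using that d(2,3) by (auto simp: sum.If_cases)
  have "(\<Sum>i\<in>UNIV. d i) = (\<Sum>i\<in>UNIV. (if d i = 1 then 1 else 0) - (if d i = -1 then 1 else 0))"
    by (rule sum.cong[OF refl]) (use d(1) in force)
  also have "\<dots> = 0" by (simp add: sum_subtractf count)
  finally have sum_d: "(\<Sum>i\<in>UNIV. d i) = 0" .
  have "(\<Sum>i\<in>UNIV. d i * d i) = (\<Sum>i\<in>UNIV. (if d i = 1 then 1 else 0) + (if d i = -1 then 1 else 0))"
    by (rule sum.cong[OF refl]) (use d(1) in force)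
  also have "\<dots> = 2 * real \<nu>" by (simp add: sum.distrib count)
  finally have sum_d2: "(\<Sum>i\<in>UNIV. d i * d i) = 2 * real \<nu>" .
  have "trace B = r * (\<Sum>i\<in>UNIV. d i)"
    using similar_matrix_trace[OF sim] by (simp add: trace_diagonal sum_distrib_left)
  with sum_d show "trace B = 0" by simp
  have "trace (B ** B) = r\<^sup>2 * (\<Sum>i\<in>UNIV. d i * d i)"
    using similar_matrix_trace[OF similar_matrix_square[OF sim]]
    by (simp add: diagonal_square trace_diagonal sum_distrib_left power2_eq_square algebra_simps)
  with sum_d2 show "trace (B ** B) = 2 * real \<nu> * r\<^sup>2" by simp
qed

lemma poly_eqI_nonzero:
  fixes P R :: "real poly"
  assumes "\<And>s. s \<noteq> 0 \<Longrightarrow> poly P s = poly R s"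
  shows "P = R"
proof (rule ccontr)
  assume "P \<noteq> R"
  hence "finite {x. poly (P - R) x = 0}" by (intro poly_roots_finite) simp
  moreover have "UNIV - {0::real} \<subseteq> {x. poly (P - R) x = 0}" using assms by auto
  moreover have "infinite (UNIV - {0::real})" by (simp add: infinite_UNIV_char_0)
  ultimately show False using finite_subset by blast
qed

text \<open>Restricted to the line \<open>y + s v\<close>, a homogeneous function of degree one is
  \<open>s \<phi>(v + s\<^sup>-\<^sup>1 y)\<close>: the reflection of a polynomial, shifted by one degree, hence affine.\<close>

lemma dderiv2_homogeneous1:
  fixes \<phi> :: "'a::real_normed_vector \<Rightarrow> real"
  assumes poly: "poly_on_lines \<phi>" and hom: "\<And>c y. \<phi> (c *\<^sub>R y) = c * \<phi> y"
  shows "dderiv2 \<phi> v y = 0"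
proof -
  obtain P where P: "\<And>s. \<phi> (y + s *\<^sub>R v) = poly P s"
    using poly unfolding poly_on_lines_def by blast
  obtain R where R: "\<And>u. \<phi> (v + u *\<^sub>R y) = poly R u"
    using poly unfolding poly_on_lines_def by blast
  define n where "n = degree R"
  have "poly (monom 1 n * P) s = poly ([:0,1:] * reflect_poly R) s" if s: "s \<noteq> 0" for s
  proof -
    have "y + s *\<^sub>R v = s *\<^sub>R (v + inverse s *\<^sub>R y)" using s by (simp add: algebra_simps)
    hence "poly P s = s * poly R (inverse s)" using P[of s] R[of "inverse s"] hom by metis
    thus ?thesis using s by (simp add: poly_reflect_poly_nz poly_monom n_def algebra_simps)
  qed
  hence eq: "monom 1 n * P = [:0,1:] * reflect_poly R" by (rule poly_eqI_nonzero)
  have "coeff P 2 = 0"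
  proof (cases "P = 0")
    case False
    have "degree (monom 1 n * P) = n + degree P"
      using False by (simp add: degree_mult_eq degree_monom_eq)
    moreover have "degree ([:0,1:] * reflect_poly R) \<le> 1 + n"
      using degree_mult_le[of "[:0,1:]" "reflect_poly R"] degree_reflect_poly_le[of R]
      by (simp add: n_def)
    ultimately have "degree P \<le> 1" using eq by simp
    thus ?thesis by (intro coeff_eq_0) simp
  qed simp
  thus ?thesis using dderiv2_eq_coeff2[OF P] by simp
qed

lemma real_polynomial_function_poly_on_lines:
  "real_polynomial_function g \<Longrightarrow> poly_on_lines g"
  by (induction rule: real_polynomial_function.induct) (simp_all add: bounded_linear.linear)

lemma real_polynomial_function_linear_dderiv:
  assumes "real_polynomial_function g"
  shows "linear (\<lambda>v. dderiv g v x)"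
  using assms
proof (induction rule: real_polynomial_function.induct)
  case (linear f)
  then show ?case by (simp add: bounded_linear.linear)
next
  case (const c)
  then show ?case by (simp add: linear_zero)
next
  case (add f g)
  then show ?case
    by (simp add: real_polynomial_function_poly_on_lines linear_compose_add)
next
  case (mult f g)
  then have "(\<lambda>v. dderiv (\<lambda>x. f x * g x) v x) = (\<lambda>v. f x * dderiv g v x + dderiv f v x * g x)"
    by (simp add: real_polynomial_function_poly_on_lines)
  moreover have "linear (\<lambda>v. f x * dderiv g v x + dderiv f v x * g x)"
    using linear_add[OF mult.IH(1)] linear_scale[OF mult.IH(1)]
      linear_add[OF mult.IH(2)] linear_scale[OF mult.IH(2)]
    by (intro linearI) (simp_all add: algebra_simps)
  ultimately show ?case by simp
qed

lemma homogeneous_quartic_real_polynomial_function: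
  assumes "homogeneous_quartic (\<theta> :: 'a::euclidean_space \<Rightarrow> real)"
  shows "real_polynomial_function \<theta>"
proof -
  obtain c where "\<And>x. \<theta> x = (\<Sum>b1\<in>Basis. \<Sum>b2\<in>Basis. \<Sum>b3\<in>Basis. \<Sum>b4\<in>Basis.
                 c b1 b2 b3 b4 * (x \<bullet> b1) * (x \<bullet> b2) * (x \<bullet> b3) * (x \<bullet> b4))"
    using assms unfolding homogeneous_quartic_def by blast
  then have "\<theta> = (\<lambda>x. \<Sum>b1\<in>Basis. \<Sum>b2\<in>Basis. \<Sum>b3\<in>Basis. \<Sum>b4\<in>Basis.
                 c b1 b2 b3 b4 * (x \<bullet> b1) * (x \<bullet> b2) * (x \<bullet> b3) * (x \<bullet> b4))"
    by auto
  moreover have "real_polynomial_function (\<lambda>x. \<Sum>b1\<in>Basis. \<Sum>b2\<in>Basis. \<Sum>b3\<in>Basis. \<Sum>b4\<in>Basis.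
                 c b1 b2 b3 b4 * (x \<bullet> b1) * (x \<bullet> b2) * (x \<bullet> b3) * (x \<bullet> b4))"
    by (intro real_polynomial_function_sum real_polynomial_function.intros
        bounded_linear_inner_left finite_Basis)
  ultimately show ?thesis by simp
qed

text \<open>The shape of \<open>|\<nabla>f|\<^sup>2\<close> as a polynomial in \<open>t = x\<^sub>n\<close>: every partial derivative
  is quadratic in \<open>t\<close> except the cubic \<open>\<partial>f/\<partial>x\<^sub>n\<close>.\<close>

lemma eikonal_t2_coeff:
  fixes \<alpha> \<beta> \<gamma> :: "'i \<Rightarrow> real" and \<alpha>' \<beta>' \<gamma>' :: "'j \<Rightarrow> real"
  assumes "\<And>t. (\<Sum>e\<in>E. (\<alpha> e * t\<^sup>2 + \<beta> e * t + \<gamma> e)\<^sup>2) + (\<Sum>e\<in>E'. (\<alpha>' e * t\<^sup>2 + \<beta>' e * t + \<gamma>' e)\<^sup>2)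
     + (4 * t ^ 3 + c1 * t + c0)\<^sup>2 = 16 * (t\<^sup>2 + r) ^ 3"
  shows "(\<Sum>e\<in>E. (\<beta> e)\<^sup>2 + 2 * \<alpha> e * \<gamma> e) + (\<Sum>e\<in>E'. (\<beta>' e)\<^sup>2 + 2 * \<alpha>' e * \<gamma>' e) + c1\<^sup>2 = 48 * r\<^sup>2"
proof -
  define sq where "sq = (\<lambda>a b c::real. [:c\<^sup>2, 2*b*c, b\<^sup>2 + 2*a*c, 2*a*b, a\<^sup>2:])"
  have sq: "(a * t\<^sup>2 + b * t + c)\<^sup>2 = poly (sq a b c) t" for a b c t :: real
    by (simp add: sq_def algebra_simps power2_eq_square)
  define L where "L = (\<Sum>e\<in>E. sq (\<alpha> e) (\<beta> e) (\<gamma> e)) + (\<Sum>e\<in>E'. sq (\<alpha>' e) (\<beta>' e) (\<gamma>' e))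
      + [:c0\<^sup>2, 2*c0*c1, c1\<^sup>2, 8*c0, 8*c1, 0, 16:]"
  define R where "R = [:16*r^3, 0, 48*r\<^sup>2, 0, 48*r, 0, 16:]"
  have "poly L t = poly R t" for t
  proof -
    have "poly [:c0\<^sup>2, 2*c0*c1, c1\<^sup>2, 8*c0, 8*c1, 0, 16:] t = (4 * t ^ 3 + c1 * t + c0)\<^sup>2"
      by (simp add: algebra_simps power2_eq_square power3_eq_cube)
    then have "poly L t = (\<Sum>e\<in>E. (\<alpha> e * t\<^sup>2 + \<beta> e * t + \<gamma> e)\<^sup>2)
        + (\<Sum>e\<in>E'. (\<alpha>' e * t\<^sup>2 + \<beta>' e * t + \<gamma>' e)\<^sup>2) + (4 * t ^ 3 + c1 * t + c0)\<^sup>2"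
      by (simp add: L_def poly_sum sq)
    also have "\<dots> = 16 * (t\<^sup>2 + r) ^ 3" by (rule assms)
    also have "\<dots> = poly R t" by (simp add: R_def algebra_simps power2_eq_square power3_eq_cube)
    finally show ?thesis .
  qed
  hence "L = R" using poly_eq_poly_eq_iff by blast
  hence "coeff L 2 = coeff R 2" by simp
  thus ?thesis by (simp add: L_def R_def coeff_sum sq_def numeral_2_eq_2)
qed

lemma even_quartic_coeffs:
  fixes c :: "nat \<Rightarrow> real"
  assumes "\<And>s. (\<Sum>k\<le>4. c k * s ^ k) = d0 + d2 * s\<^sup>2 + d4 * s ^ 4"
  shows "c 0 = d0" "c 1 = 0" "c 2 = d2" "c 3 = 0" "c 4 = d4"
proof -
  have "poly [:c 0, c 1, c 2, c 3, c 4:] s = poly [:d0, 0, d2, 0, d4:] s" for s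
    using assms[of s] by (simp add: atMost_Suc eval_nat_numeral algebra_simps power2_eq_square)
  hence "[:c 0, c 1, c 2, c 3, c 4:] = [:d0, 0, d2, 0, d4:]" using poly_eq_poly_eq_iff by blast
  thus "c 0 = d0" "c 1 = 0" "c 2 = d2" "c 3 = 0" "c 4 = d4" by simp_all
qed

context
  fixes \<theta> :: "'a::euclidean_space \<times> 'b::euclidean_space \<Rightarrow> real"
    and \<theta>k :: "nat \<Rightarrow> 'a \<times> 'b \<Rightarrow> real" and n :: nat
  assumes poly: "real_polynomial_function \<theta>"
    and split: "\<And>\<xi> \<eta>. \<theta> (\<xi>, \<eta>) = (\<Sum>k\<le>n. \<theta>k k (\<xi>, \<eta>))"
    and bihom: "\<And>k s t \<xi> \<eta>. k \<le> n \<Longrightarrow> \<theta>k k (s *\<^sub>R \<xi>, t *\<^sub>R \<eta>) = s ^ k * t ^ (n - k) * \<theta>k k (\<xi>, \<eta>)"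
begin

lemma euler_bihomogeneous_fst:
  "(\<Sum>e\<in>Basis. (\<xi> \<bullet> e) * dderiv \<theta> (e, 0) (\<xi>, \<eta>)) = (\<Sum>k\<le>n. real k * \<theta>k k (\<xi>, \<eta>))"
proof -
  have hom: "\<theta>k k (c *\<^sub>R x, y) = c ^ k * \<theta>k k (x, y)" if "k \<le> n" for k c x y
    using bihom[OF that, of c x 1 y] by simp
  have lin: "linear (\<lambda>v. dderiv \<theta> v (\<xi>, \<eta>))"
    using poly by (rule real_polynomial_function_linear_dderiv)
  have "(\<Sum>e\<in>Basis. (\<xi> \<bullet> e) * dderiv \<theta> (e, 0) (\<xi>, \<eta>)) = dderiv \<theta> (\<Sum>e\<in>Basis. (\<xi> \<bullet> e) *\<^sub>R (e, 0)) (\<xi>, \<eta>)"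
    by (simp add: linear_sum[OF lin] linear_scale[OF lin] del: scaleR_Pair)
  also have "(\<Sum>e\<in>Basis. (\<xi> \<bullet> e) *\<^sub>R (e, 0::'b)) = (\<xi>, 0)"
    using euclidean_representation[of \<xi>] by (simp add: sum_prod)
  also have "dderiv \<theta> (\<xi>, 0) (\<xi>, \<eta>) = deriv (\<lambda>s. \<Sum>k\<le>n. (1 + s) ^ k * \<theta>k k (\<xi>, \<eta>)) 0"
  proof -
    have "\<theta> ((\<xi>, \<eta>) + s *\<^sub>R (\<xi>, 0)) = (\<Sum>k\<le>n. \<theta>k k ((1 + s) *\<^sub>R \<xi>, \<eta>))" for s
      by (simp add: split algebra_simps)
    then show ?thesis by (simp add: dderiv_def hom)
  qed
  also have "\<dots> = (\<Sum>k\<le>n. real k * \<theta>k k (\<xi>, \<eta>))"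
    by (rule DERIV_imp_deriv) (auto intro!: derivative_eq_intros)
  finally show ?thesis .
qed

lemma euler_bihomogeneous_snd:
  "(\<Sum>e\<in>Basis. (\<eta> \<bullet> e) * dderiv \<theta> (0, e) (\<xi>, \<eta>)) = (\<Sum>k\<le>n. real (n - k) * \<theta>k k (\<xi>, \<eta>))"
proof -
  have hom: "\<theta>k k (x, c *\<^sub>R y) = c ^ (n - k) * \<theta>k k (x, y)" if "k \<le> n" for k c x y
    using bihom[OF that, of 1 x c y] by simp
  have lin: "linear (\<lambda>v. dderiv \<theta> v (\<xi>, \<eta>))"
    using poly by (rule real_polynomial_function_linear_dderiv)
  have "(\<Sum>e\<in>Basis. (\<eta> \<bullet> e) * dderiv \<theta> (0, e) (\<xi>, \<eta>)) = dderiv \<theta> (\<Sum>e\<in>Basis. (\<eta> \<bullet> e) *\<^sub>R (0, e)) (\<xi>, \<eta>)"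
    by (simp add: linear_sum[OF lin] linear_scale[OF lin] del: scaleR_Pair)
  also have "(\<Sum>e\<in>Basis. (\<eta> \<bullet> e) *\<^sub>R (0::'a, e)) = (0, \<eta>)"
    using euclidean_representation[of \<eta>] by (simp add: sum_prod)
  also have "dderiv \<theta> (0, \<eta>) (\<xi>, \<eta>) = deriv (\<lambda>s. \<Sum>k\<le>n. (1 + s) ^ (n - k) * \<theta>k k (\<xi>, \<eta>)) 0"
  proof -
    have "\<theta> ((\<xi>, \<eta>) + s *\<^sub>R (0, \<eta>)) = (\<Sum>k\<le>n. \<theta>k k (\<xi>, (1 + s) *\<^sub>R \<eta>))" for s
      by (simp add: split algebra_simps)
    then show ?thesis by (simp add: dderiv_def hom)
  qed
  also have "\<dots> = (\<Sum>k\<le>n. real (n - k) * \<theta>k k (\<xi>, \<eta>))"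
    by (rule DERIV_imp_deriv) (auto intro!: derivative_eq_intros)
  finally show ?thesis .
qed

end

lemma sum_Basis_prod_real:
  fixes F :: "('a::euclidean_space \<times> 'b::euclidean_space) \<Rightarrow> real"
  shows "sum F Basis = (\<Sum>i\<in>Basis. F (i, 0)) + (\<Sum>i\<in>Basis. F (0, i))"
proof -
  have "inj_on (\<lambda>u. (u::'a, 0::'b)) Basis" "inj_on (\<lambda>u. (0::'a, u::'b)) Basis"
    by (auto intro!: inj_onI)
  thus ?thesis
    unfolding Basis_prod_def by (subst sum.union_disjoint) (auto simp: sum.reindex)
qed

lemma sum_Basis_vec:
  fixes F :: "real^'n \<Rightarrow> real"
  shows "sum F Basis = (\<Sum>j\<in>UNIV. F (axis j 1))"
proof -
  have "Basis = (\<lambda>j. axis j (1::real)) ` (UNIV :: 'n set)"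
    by (auto simp: Basis_vec_def)
  moreover have "inj (\<lambda>j. axis j (1::real) :: real^'n)"
    by (auto intro!: injI simp: axis_eq_axis)
  ultimately show ?thesis
    using sum.reindex[of "\<lambda>j. axis j (1::real) :: real^'n" UNIV F] by (simp add: o_def)
qed

lemma sum_Basis_inner_square: "(\<Sum>e\<in>Basis. (v \<bullet> e)\<^sup>2) = v \<bullet> (v::'a::euclidean_space)"
  by (simp add: euclidean_inner[of v v] power2_eq_square)

lemma sum_Basis_inner_self: "(\<Sum>e\<in>(Basis::(real^'n) set). e \<bullet> e) = real CARD('n)"
proof -
  have "(\<Sum>e\<in>(Basis::(real^'n) set). e \<bullet> e) = (\<Sum>e\<in>(Basis::(real^'n) set). 1)"
    by (rule sum.cong) auto
  thus ?thesis by simp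
qed

lemma sum_axis_mult: "(\<Sum>i\<in>UNIV. (axis j (1::real) :: real^'n) $ i * g i) = g j"
proof -
  have "(\<Sum>i\<in>UNIV. (axis j (1::real) :: real^'n) $ i * g i) = (\<Sum>i\<in>UNIV. if i = j then g j else 0)"
    by (rule sum.cong) (auto simp: axis_def)
  thus ?thesis by simp
qed

lemma matrix_vector_mult_axis: "((A::real^'n^'m) *v axis j 1) $ a = A $ a $ j"
  by (simp add: matrix_vector_mult_def axis_def if_distrib cong: if_cong)

lemma sum_Basis_inner_matrix: "(\<Sum>e\<in>Basis. e \<bullet> ((A::real^'n^'n) *v e)) = trace A"
  by (simp add: sum_Basis_vec inner_axis' matrix_vector_mult_axis trace_def)

lemma sum_Basis_norm_matrix_symmetric:
  assumes "transpose (M::real^'n^'n) = M"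
  shows "(\<Sum>e\<in>Basis. (M *v e) \<bullet> (M *v e)) = trace (M ** M)"
proof -
  have "M $ j $ a = M $ a $ j" for j a using assms by (metis transpose_def vec_lambda_beta)
  then show ?thesis
    by (simp add: sum_Basis_vec inner_vec_def matrix_vector_mult_axis trace_def matrix_matrix_mult_def)
qed

lemma inner_matrix_symmetric:
  "transpose (A::real^'n^'n) = A \<Longrightarrow> x \<bullet> (A *v y) = y \<bullet> (A *v x)"
  by (metis dot_lmul_matrix inner_commute transpose_transpose vector_transpose_matrix)

definition matrix_pencil :: "('q::finite \<Rightarrow> real^'p^'p) \<Rightarrow> real^'q \<Rightarrow> real^'p^'p" where
  "matrix_pencil A \<eta> = (\<Sum>i\<in>UNIV. \<eta> $ i *\<^sub>R A i)"

lemma matrix_pencil_mult: "matrix_pencil A \<eta> *v x = (\<Sum>i\<in>UNIV. \<eta> $ i *\<^sub>R (A i *v x))"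
  unfolding vec_eq_iff matrix_pencil_def
  by (simp add: matrix_vector_mult_def sum_distrib_left sum_distrib_right mult.assoc sum_component)
     (intro allI sum.swap)

lemma inner_matrix_pencil: "x \<bullet> (matrix_pencil A \<eta> *v y) = (\<Sum>i\<in>UNIV. \<eta> $ i * (x \<bullet> (A i *v y)))"
  by (simp add: matrix_pencil_mult inner_sum_right)

lemma inner_matrix_pencil_pencil:
  "(matrix_pencil A \<eta> *v x) \<bullet> (matrix_pencil A \<eta> *v y)
     = (\<Sum>i\<in>UNIV. \<Sum>k\<in>UNIV. \<eta> $ i * \<eta> $ k * ((A i *v x) \<bullet> (A k *v y)))"
  by (simp add: matrix_pencil_mult inner_sum_left inner_sum_right sum_distrib_left mult.assoc)
    (subst sum.swap, simp add: mult.left_commute)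

lemma matrix_pencil_axis: "matrix_pencil A (axis i 1) = A i"
proof -
  have "matrix_pencil A (axis i 1) = (\<Sum>k\<in>UNIV. if k = i then A i else 0)"
    unfolding matrix_pencil_def by (rule sum.cong) (auto simp: axis_def)
  thus ?thesis by simp
qed

lemma transpose_matrix_pencil:
  assumes "\<And>i. transpose (A i) = A i"
  shows "transpose (matrix_pencil A \<eta>) = matrix_pencil A \<eta>"
proof -
  have "transpose (matrix_pencil A \<eta>) = (\<Sum>i\<in>UNIV. \<eta> $ i *\<^sub>R transpose (A i))"
    by (simp add: vec_eq_iff transpose_def sum_component matrix_pencil_def)
  then show ?thesis by (simp add: assms matrix_pencil_def)
qed

context
  fixes A :: "'q::finite \<Rightarrow> real^'p::finite^'p" and \<nu> :: nat
  assumes A_sim: "\<And>\<eta>. \<eta> \<noteq> 0 \<Longrightarrow> sign_diag_similar \<nu> (norm \<eta>) (matrix_pencil A \<eta>)"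
begin

lemma trace_matrix_pencil_basis: "trace (A i) = 0"
  using trace_sign_diag_similar(1)[OF A_sim[of "axis i 1"]] by (simp add: matrix_pencil_axis)

lemma trace_matrix_pencil_square:
  "trace (matrix_pencil A \<eta> ** matrix_pencil A \<eta>) = 2 * real \<nu> * (\<eta> \<bullet> \<eta>)"
proof (cases "\<eta> = 0")
  case True
  then show ?thesis by (simp add: matrix_pencil_def trace_def)
next
  case False
  then show ?thesis
    using trace_sign_diag_similar(2)[OF A_sim[OF False]] by (simp add: power2_norm_eq_inner)
qed

end

text \<open>Points of \<open>\<real>\<^sup>n\<close> in the coordinates \<open>(\<xi>, \<eta>, x\<^sub>n)\<close>.\<close>

type_synonym ('p, 'q) split_space = "(real^'p) \<times> (real^'q) \<times> real"

lemma sum_Basis_split_space: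
  fixes F :: "('p::finite, 'q::finite) split_space \<Rightarrow> real"
  shows "sum F Basis = (\<Sum>e\<in>Basis. F (e, 0, 0)) + (\<Sum>e\<in>Basis. F (0, e, 0)) + F (0, 0, 1)"
  by (simp add: sum_Basis_prod_real zero_prod_def)

lemma linear_fst_snd [simp]: "linear (\<lambda>x::'a::real_vector \<times> 'b::real_vector \<times> 'c::real_vector. fst (snd x))"
  by (rule linearI) simp_all

lemma linear_snd_snd [simp]: "linear (\<lambda>x::'a::real_vector \<times> 'b::real_vector \<times> 'c::real_vector. snd (snd x))"
  by (rule linearI) simp_all

lemma linear_fst_fst_snd [simp]:
  "linear (\<lambda>x::'a::real_vector \<times> 'b::real_vector \<times> 'c::real_vector. (fst x, fst (snd x)))"
  by (rule linearI) simp_all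

lemma linear_fst_snd_component [simp]:
  "linear (\<lambda>x::'a::real_vector \<times> (real^'n) \<times> 'c::real_vector. fst (snd x) $ i)"
  by (rule linearI) simp_all

lemma linear_matrix_fst [simp]: "linear (\<lambda>x::(real^'n) \<times> 'b::real_vector. (A::real^'n^'m) *v fst x)"
  by (rule linearI) (simp_all add: matrix_vector_right_distrib matrix_vector_mult_scaleR)

declare linear_fst [simp]

text \<open>Here \<open>\<psi>(\<xi>, \<eta>) = \<xi>\<^sup>TA\<^sub>\<eta>\<xi>\<close> is expanded along the basis matrices \<open>A\<^sub>i\<close>.\<close>

definition f_without_theta :: "('q::finite \<Rightarrow> real^'p^'p) \<Rightarrow> ('p::finite, 'q) split_space \<Rightarrow> real" where
  "f_without_theta A = (\<lambda>x. (snd (snd x)) ^ 4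
     + 2 * (fst x \<bullet> fst x - 3 * (fst (snd x) \<bullet> fst (snd x))) * (snd (snd x))\<^sup>2
     + 8 * (\<Sum>i\<in>UNIV. fst (snd x) $ i * (fst x \<bullet> (A i *v fst x))) * snd (snd x))"

text \<open>\<open>f\<close> without \<open>\<theta>\<^sub>3\<close>: the other components of \<open>\<theta>\<close> are the ones forced by the
  eikonal equation (lemma \<open>theta_components\<close>).\<close>

definition f_without_theta3 :: "('q::finite \<Rightarrow> real^'p^'p) \<Rightarrow> ('p::finite, 'q) split_space \<Rightarrow> real" where
  "f_without_theta3 A = (\<lambda>x. f_without_theta A x
     + (fst (snd x) \<bullet> fst (snd x))\<^sup>2
     + (- 6 * (fst x \<bullet> fst x) * (fst (snd x) \<bullet> fst (snd x))
        + 8 * (\<Sum>i\<in>UNIV. \<Sum>k\<in>UNIV. fst (snd x) $ i * fst (snd x) $ k * ((A i *v fst x) \<bullet> (A k *v fst x))))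
     + ((fst x \<bullet> fst x)\<^sup>2 - 2 * (\<Sum>j\<in>UNIV. (fst x \<bullet> (A j *v fst x))\<^sup>2)))"

lemma poly_on_lines_f_without_theta [simp]: "poly_on_lines (f_without_theta A)"
  unfolding f_without_theta_def by simp

lemma poly_on_lines_f_without_theta3 [simp]: "poly_on_lines (f_without_theta3 A)"
  unfolding f_without_theta3_def by simp

context
  fixes A :: "'q::finite \<Rightarrow> real^'p::finite^'p" and \<xi> :: "real^'p" and \<eta> :: "real^'q" and t :: real
begin

lemma dderiv_f_without_theta_xi:
  "dderiv (f_without_theta A) (e, 0, 0) (\<xi>, \<eta>, t) =
     2*(\<xi> \<bullet> e + e \<bullet> \<xi>)*t\<^sup>2 + 8*(\<Sum>i\<in>UNIV. \<eta>$i*(\<xi> \<bullet> (A i *v e) + e \<bullet> (A i *v \<xi>)))*t"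
  unfolding f_without_theta_def
  by (simp add: sum.distrib sum_distrib_left sum_distrib_right mult.assoc power2_eq_square algebra_simps)

lemma dderiv_f_without_theta_eta:
  "dderiv (f_without_theta A) (0, e, 0) (\<xi>, \<eta>, t) =
     -6*(\<eta> \<bullet> e + e \<bullet> \<eta>)*t\<^sup>2 + 8*(\<Sum>i\<in>UNIV. e$i*(\<xi> \<bullet> (A i *v \<xi>)))*t"
  unfolding f_without_theta_def
  by (simp add: sum.distrib sum_distrib_left sum_distrib_right mult.assoc power2_eq_square algebra_simps)

lemma dderiv_f_without_theta_t:
  "dderiv (f_without_theta A) (0, 0, 1) (\<xi>, \<eta>, t) =
     4*t^3 + 4*(\<xi> \<bullet> \<xi> - 3*(\<eta> \<bullet> \<eta>))*t + 8*(\<Sum>i\<in>UNIV. \<eta>$i*(\<xi> \<bullet> (A i *v \<xi>)))"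
  unfolding f_without_theta_def
  by (simp add: sum.distrib sum_distrib_left sum_distrib_right mult.assoc power2_eq_square
      power3_eq_cube algebra_simps)

lemma dderiv2_f_without_theta3_xi:
  "dderiv2 (f_without_theta3 A) (e, 0, 0) (\<xi>, \<eta>, t) =
     4*t\<^sup>2*(e \<bullet> e) + 16*t*(\<Sum>i\<in>UNIV. \<eta>$i*(e \<bullet> (A i *v e))) - 12*(e \<bullet> e)*(\<eta> \<bullet> \<eta>)
     + 16*(\<Sum>i\<in>UNIV. \<Sum>k\<in>UNIV. \<eta>$i*\<eta>$k*((A i *v e) \<bullet> (A k *v e))) + 4*(\<xi> \<bullet> \<xi>)*(e \<bullet> e) + 8*(\<xi> \<bullet> e)\<^sup>2
     - 2*(\<Sum>j\<in>UNIV. 4*(\<xi> \<bullet> (A j *v \<xi>))*(e \<bullet> (A j *v e)) + 2*(\<xi> \<bullet> (A j *v e) + e \<bullet> (A j *v \<xi>))\<^sup>2)"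
  unfolding f_without_theta3_def f_without_theta_def
  using inner_commute[of e \<xi>]
  by (simp add: sum.distrib sum_distrib_left sum_distrib_right mult.assoc power2_eq_square algebra_simps)

lemma dderiv2_f_without_theta3_eta:
  "dderiv2 (f_without_theta3 A) (0, e, 0) (\<xi>, \<eta>, t) =
     -12*t\<^sup>2*(e \<bullet> e) + 4*(\<eta> \<bullet> \<eta>)*(e \<bullet> e) + 8*(\<eta> \<bullet> e)\<^sup>2 - 12*(\<xi> \<bullet> \<xi>)*(e \<bullet> e)
     + 16*(\<Sum>i\<in>UNIV. \<Sum>k\<in>UNIV. e$i*e$k*((A i *v \<xi>) \<bullet> (A k *v \<xi>)))"
  unfolding f_without_theta3_def f_without_theta_def
  using inner_commute[of e \<eta>]
  by (simp add: sum.distrib sum_distrib_left sum_distrib_right mult.assoc power2_eq_square algebra_simps)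

lemma dderiv2_f_without_theta3_t:
  "dderiv2 (f_without_theta3 A) (0, 0, 1) (\<xi>, \<eta>, t) = 12*t\<^sup>2 + 4*(\<xi> \<bullet> \<xi> - 3*(\<eta> \<bullet> \<eta>))"
  unfolding f_without_theta3_def f_without_theta_def
  by (simp add: sum.distrib sum_distrib_left sum_distrib_right mult.assoc power2_eq_square algebra_simps)

end

lemma sum_dderiv2_f_without_theta3_eta:
  fixes A :: "'q::finite \<Rightarrow> real^'p::finite^'p"
  shows "(\<Sum>e\<in>Basis. dderiv2 (f_without_theta3 A) (0, e, 0) (\<xi>, \<eta>, t)) =
     -12*t\<^sup>2*real CARD('q) + 4*(\<eta> \<bullet> \<eta>)*real CARD('q) + 8*(\<eta> \<bullet> \<eta>) - 12*(\<xi> \<bullet> \<xi>)*real CARD('q)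
     + 16 * (\<Sum>j\<in>UNIV. (A j *v \<xi>) \<bullet> (A j *v \<xi>))"
proof -
  have "(\<Sum>i\<in>UNIV. \<Sum>k\<in>UNIV. (axis j 1 :: real^'q) $ i * (axis j 1 :: real^'q) $ k * g i k)
          = (\<Sum>i\<in>UNIV. (axis j 1 :: real^'q) $ i * (\<Sum>k\<in>UNIV. (axis j 1 :: real^'q) $ k * g i k))"
    for j and g :: "'q \<Rightarrow> 'q \<Rightarrow> real"
    by (simp add: sum_distrib_left mult.assoc)
  then have "(\<Sum>e\<in>(Basis::(real^'q) set). \<Sum>i\<in>UNIV. \<Sum>k\<in>UNIV. e$i*e$k*((A i *v \<xi>) \<bullet> (A k *v \<xi>)))
          = (\<Sum>j\<in>UNIV. (A j *v \<xi>) \<bullet> (A j *v \<xi>))"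
    by (simp add: sum_Basis_vec sum_axis_mult)
  then show ?thesis
    unfolding dderiv2_f_without_theta3_eta
    by (simp add: sum.distrib sum_subtractf sum_Basis_inner_self sum_Basis_inner_square
        flip: sum_distrib_left sum_distrib_right) (simp add: algebra_simps)
qed

section \<open>The eikonal equation determines \<open>\<theta>\<close> up to \<open>\<theta>\<^sub>3\<close>\<close>

locale eikonal_normal_form =
  fixes A :: "'q::finite \<Rightarrow> real^'p::finite^'p"
    and \<theta> :: "(real^'p) \<times> (real^'q) \<Rightarrow> real"
    and \<theta>k :: "nat \<Rightarrow> (real^'p) \<times> (real^'q) \<Rightarrow> real"
    and f :: "('p, 'q) split_space \<Rightarrow> real"
  assumes A_sym: "\<And>i. transpose (A i) = A i"
    and theta_poly: "real_polynomial_function \<theta>"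
    and theta_split: "\<And>\<xi> \<eta>. \<theta> (\<xi>, \<eta>) = (\<Sum>k\<le>4. \<theta>k k (\<xi>, \<eta>))"
    and theta_bihom: "\<And>k s t \<xi> \<eta>. k \<le> 4 \<Longrightarrow>
                  \<theta>k k (s *\<^sub>R \<xi>, t *\<^sub>R \<eta>) = s ^ k * t ^ (4 - k) * \<theta>k k (\<xi>, \<eta>)"
    and f_eq: "\<And>\<xi> \<eta> t. f (\<xi>, \<eta>, t) =
                  t ^ 4 + 2 * ((norm \<xi>)\<^sup>2 - 3 * (norm \<eta>)\<^sup>2) * t\<^sup>2
                  + 8 * (\<xi> \<bullet> (matrix_pencil A \<eta> *v \<xi>)) * t + \<theta> (\<xi>, \<eta>)"
    and eikonal: "\<And>x. grad_norm2 f x = 16 * (norm x) ^ 6"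
begin

lemma inner_A_swap: "x \<bullet> (A i *v y) = y \<bullet> (A i *v x)"
  by (rule inner_matrix_symmetric[OF A_sym])

lemma theta_homogeneous_xi: "k \<le> 4 \<Longrightarrow> \<theta>k k (c *\<^sub>R \<xi>, \<eta>) = c ^ k * \<theta>k k (\<xi>, \<eta>)"
  using theta_bihom[of k c \<xi> 1 \<eta>] by simp

lemma theta_homogeneous_eta: "k \<le> 4 \<Longrightarrow> \<theta>k k (\<xi>, c *\<^sub>R \<eta>) = c ^ (4 - k) * \<theta>k k (\<xi>, \<eta>)"
  using theta_bihom[of k 1 \<xi> c \<eta>] by simp

lemma f_eq_without_theta: "f = (\<lambda>x. f_without_theta A x + \<theta> (fst x, fst (snd x)))"
proof
  fix x :: "('p, 'q) split_space"
  obtain \<xi> \<eta> t where x: "x = (\<xi>, \<eta>, t)" by (cases x) auto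
  show "f x = f_without_theta A x + \<theta> (fst x, fst (snd x))"
    unfolding x f_eq f_without_theta_def by (simp add: inner_matrix_pencil power2_norm_eq_inner)
qed

lemma poly_on_lines_theta_proj: "poly_on_lines (\<lambda>x::('p, 'q) split_space. \<theta> (fst x, fst (snd x)))"
  using poly_on_lines_affine_compose[OF real_polynomial_function_poly_on_lines[OF theta_poly]
      linear_fst_fst_snd, of 0]
  by simp

lemma poly_on_lines_f: "poly_on_lines f"
  unfolding f_eq_without_theta
  by (intro poly_on_lines_add poly_on_lines_f_without_theta poly_on_lines_theta_proj)

lemma dderiv_f:
  "dderiv f b (\<xi>, \<eta>, t) = dderiv (f_without_theta A) b (\<xi>, \<eta>, t) + dderiv \<theta> (fst b, fst (snd b)) (\<xi>, \<eta>)"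
  unfolding f_eq_without_theta
  using dderiv_compose_linear[OF linear_fst_fst_snd, of \<theta> b "(\<xi>, \<eta>, t)"]
  by (simp add: poly_on_lines_theta_proj)

lemma dderiv_f_xi:
  "dderiv f (e, 0, 0) (\<xi>, \<eta>, t) =
     4 * (\<xi> \<bullet> e) * t\<^sup>2 + 16 * ((matrix_pencil A \<eta> *v \<xi>) \<bullet> e) * t + dderiv \<theta> (e, 0) (\<xi>, \<eta>)"
  unfolding dderiv_f dderiv_f_without_theta_xi inner_commute[of "matrix_pencil A \<eta> *v \<xi>" e]
    inner_matrix_pencil
  by (simp add: inner_A_swap inner_commute[of e \<xi>] sum.distrib sum_distrib_left algebra_simps)

lemma dderiv_f_eta:
  "dderiv f (0, e, 0) (\<xi>, \<eta>, t) =
     -12 * (\<eta> \<bullet> e) * t\<^sup>2 + 8 * (\<Sum>i\<in>UNIV. e $ i * (\<xi> \<bullet> (A i *v \<xi>))) * t + dderiv \<theta> (0, e) (\<xi>, \<eta>)"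
  unfolding dderiv_f dderiv_f_without_theta_eta by (simp add: inner_commute[of e \<eta>] algebra_simps)

lemma dderiv_f_t:
  "dderiv f (0, 0, 1) (\<xi>, \<eta>, t) =
     4 * t ^ 3 + 4 * (\<xi> \<bullet> \<xi> - 3 * (\<eta> \<bullet> \<eta>)) * t + 8 * (\<xi> \<bullet> (matrix_pencil A \<eta> *v \<xi>))"
  unfolding dderiv_f dderiv_f_without_theta_t by (simp add: inner_matrix_pencil dderiv_def)

lemma eikonal_expanded:
  "(\<Sum>e\<in>Basis. (4 * (\<xi> \<bullet> e) * t\<^sup>2 + 16 * ((matrix_pencil A \<eta> *v \<xi>) \<bullet> e) * t
                  + dderiv \<theta> (e, 0) (\<xi>, \<eta>))\<^sup>2)
   + (\<Sum>e\<in>Basis. (-12 * (\<eta> \<bullet> e) * t\<^sup>2 + 8 * (\<Sum>i\<in>UNIV. e $ i * (\<xi> \<bullet> (A i *v \<xi>))) * t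
                  + dderiv \<theta> (0, e) (\<xi>, \<eta>))\<^sup>2)
   + (4 * t ^ 3 + 4 * (\<xi> \<bullet> \<xi> - 3 * (\<eta> \<bullet> \<eta>)) * t + 8 * (\<xi> \<bullet> (matrix_pencil A \<eta> *v \<xi>)))\<^sup>2
   = 16 * (t\<^sup>2 + (\<xi> \<bullet> \<xi> + \<eta> \<bullet> \<eta>)) ^ 3"
proof -
  have "(norm (\<xi>, \<eta>, t)) ^ 6 = ((norm (\<xi>, \<eta>, t))\<^sup>2) ^ 3" by (simp flip: power_mult)
  also have "(norm (\<xi>, \<eta>, t))\<^sup>2 = t\<^sup>2 + (\<xi> \<bullet> \<xi> + \<eta> \<bullet> \<eta>)"
    by (simp add: norm_Pair power2_norm_eq_inner)
  finally have "grad_norm2 f (\<xi>, \<eta>, t) = 16 * (t\<^sup>2 + (\<xi> \<bullet> \<xi> + \<eta> \<bullet> \<eta>)) ^ 3"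
    by (simp add: eikonal)
  then show ?thesis
    unfolding grad_norm2_def sum_Basis_split_space dderiv_f_xi dderiv_f_eta dderiv_f_t .
qed

text \<open>The coefficient of \<open>t\<^sup>2\<close> in the eikonal equation; Euler's identity turns the
  cross terms with \<open>\<nabla>\<theta>\<close> into a weighted sum of the \<open>\<theta>\<^sub>k\<close>.\<close>

lemma theta_weighted_sum:
  "(\<Sum>k\<le>4. (32 * real k - 96) * \<theta>k k (\<xi>, \<eta>))
     = 32 * (\<xi> \<bullet> \<xi>)\<^sup>2 + 192 * (\<xi> \<bullet> \<xi>) * (\<eta> \<bullet> \<eta>) - 96 * (\<eta> \<bullet> \<eta>)\<^sup>2
       - 256 * ((matrix_pencil A \<eta> *v \<xi>) \<bullet> (matrix_pencil A \<eta> *v \<xi>))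
       - 64 * (\<Sum>j\<in>UNIV. (\<xi> \<bullet> (A j *v \<xi>))\<^sup>2)"
proof -
  define \<alpha> where "\<alpha> e = 4 * (\<xi> \<bullet> e)" for e
  define \<beta> where "\<beta> e = 16 * ((matrix_pencil A \<eta> *v \<xi>) \<bullet> e)" for e
  define \<gamma> where "\<gamma> e = dderiv \<theta> (e, 0) (\<xi>, \<eta>)" for e
  define \<alpha>' where "\<alpha>' e = -12 * (\<eta> \<bullet> e)" for e
  define \<beta>' where "\<beta>' (e::real^'q) = 8 * (\<Sum>i\<in>UNIV. e $ i * (\<xi> \<bullet> (A i *v \<xi>)))" for e
  define \<gamma>' where "\<gamma>' e = dderiv \<theta> (0, e) (\<xi>, \<eta>)" for e
  have "(\<Sum>e\<in>Basis. (\<beta> e)\<^sup>2 + 2 * \<alpha> e * \<gamma> e) + (\<Sum>e\<in>Basis. (\<beta>' e)\<^sup>2 + 2 * \<alpha>' e * \<gamma>' e)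
          + (4 * (\<xi> \<bullet> \<xi> - 3 * (\<eta> \<bullet> \<eta>)))\<^sup>2 = 48 * (\<xi> \<bullet> \<xi> + \<eta> \<bullet> \<eta>)\<^sup>2"
    by (rule eikonal_t2_coeff) (unfold \<alpha>_def \<beta>_def \<gamma>_def \<alpha>'_def \<beta>'_def \<gamma>'_def, rule eikonal_expanded)
  moreover have "(\<Sum>e\<in>Basis. (\<beta> e)\<^sup>2) = 256 * ((matrix_pencil A \<eta> *v \<xi>) \<bullet> (matrix_pencil A \<eta> *v \<xi>))"
    by (simp add: \<beta>_def power_mult_distrib sum_Basis_inner_square flip: sum_distrib_left)
  moreover have "(\<Sum>e\<in>Basis. 2 * \<alpha> e * \<gamma> e) = 8 * (\<Sum>k\<le>4. real k * \<theta>k k (\<xi>, \<eta>))"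
    using euler_bihomogeneous_fst[OF theta_poly theta_split theta_bihom, where \<xi> = \<xi> and \<eta> = \<eta>]
    by (simp add: \<alpha>_def \<gamma>_def mult.assoc flip: sum_distrib_left)
  moreover have "(\<Sum>e\<in>Basis. (\<beta>' e)\<^sup>2) = 64 * (\<Sum>j\<in>UNIV. (\<xi> \<bullet> (A j *v \<xi>))\<^sup>2)"
    by (simp add: \<beta>'_def sum_Basis_vec power_mult_distrib sum_axis_mult flip: sum_distrib_left)
  moreover have "(\<Sum>e\<in>Basis. 2 * \<alpha>' e * \<gamma>' e) = -24 * (\<Sum>k\<le>4. real (4 - k) * \<theta>k k (\<xi>, \<eta>))"
    using euler_bihomogeneous_snd[OF theta_poly theta_split theta_bihom, where \<xi> = \<xi> and \<eta> = \<eta>]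
    by (simp add: \<alpha>'_def \<gamma>'_def mult.assoc sum_negf flip: sum_distrib_left)
  moreover have "(\<Sum>k\<le>4. (32 * real k - 96) * \<theta>k k (\<xi>, \<eta>))
      = 8 * (\<Sum>k\<le>4. real k * \<theta>k k (\<xi>, \<eta>)) - 24 * (\<Sum>k\<le>4. real (4 - k) * \<theta>k k (\<xi>, \<eta>))"
    by (simp add: atMost_Suc eval_nat_numeral algebra_simps)
  ultimately show ?thesis
    by (simp add: sum.distrib algebra_simps power2_eq_square)
qed

text \<open>Replacing \<open>\<xi>\<close> by \<open>s\<xi>\<close> in the weighted sum separates the \<open>\<theta>\<^sub>k\<close>, since \<open>\<theta>\<^sub>3\<close>
  is the only one with weight \<open>0\<close>.\<close>

lemma theta_components:
  "\<theta>k 0 (\<xi>, \<eta>) = (\<eta> \<bullet> \<eta>)\<^sup>2"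
  "\<theta>k 1 (\<xi>, \<eta>) = 0"
  "\<theta>k 2 (\<xi>, \<eta>) = -6 * (\<xi> \<bullet> \<xi>) * (\<eta> \<bullet> \<eta>)
                     + 8 * ((matrix_pencil A \<eta> *v \<xi>) \<bullet> (matrix_pencil A \<eta> *v \<xi>))"
  "\<theta>k 4 (\<xi>, \<eta>) = (\<xi> \<bullet> \<xi>)\<^sup>2 - 2 * (\<Sum>j\<in>UNIV. (\<xi> \<bullet> (A j *v \<xi>))\<^sup>2)"
proof -
  define W where "W = (matrix_pencil A \<eta> *v \<xi>) \<bullet> (matrix_pencil A \<eta> *v \<xi>)"
  define S where "S = (\<Sum>j\<in>UNIV. (\<xi> \<bullet> (A j *v \<xi>))\<^sup>2)"
  have "(\<Sum>k\<le>4. ((32 * real k - 96) * \<theta>k k (\<xi>, \<eta>)) * s ^ k)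
          = -96 * (\<eta> \<bullet> \<eta>)\<^sup>2 + (192 * (\<xi> \<bullet> \<xi>) * (\<eta> \<bullet> \<eta>) - 256 * W) * s\<^sup>2
            + (32 * (\<xi> \<bullet> \<xi>)\<^sup>2 - 64 * S) * s ^ 4" for s
  proof -
    have "(\<Sum>k\<le>4. ((32 * real k - 96) * \<theta>k k (\<xi>, \<eta>)) * s ^ k)
            = (\<Sum>k\<le>4. (32 * real k - 96) * \<theta>k k (s *\<^sub>R \<xi>, \<eta>))"
      by (rule sum.cong) (auto simp: theta_homogeneous_xi)
    also have "\<dots> = -96 * (\<eta> \<bullet> \<eta>)\<^sup>2 + (192 * (\<xi> \<bullet> \<xi>) * (\<eta> \<bullet> \<eta>) - 256 * W) * s\<^sup>2
                    + (32 * (\<xi> \<bullet> \<xi>)\<^sup>2 - 64 * S) * s ^ 4"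
      unfolding theta_weighted_sum W_def S_def
      by (simp add: matrix_vector_mult_scaleR sum_distrib_left power2_eq_square eval_nat_numeral
          algebra_simps)
    finally show ?thesis .
  qed
  note coeffs = even_quartic_coeffs[OF this]
  show "\<theta>k 0 (\<xi>, \<eta>) = (\<eta> \<bullet> \<eta>)\<^sup>2" "\<theta>k 1 (\<xi>, \<eta>) = 0"
    using coeffs(1,2) by simp_all
  show "\<theta>k 2 (\<xi>, \<eta>) = -6 * (\<xi> \<bullet> \<xi>) * (\<eta> \<bullet> \<eta>)
                     + 8 * ((matrix_pencil A \<eta> *v \<xi>) \<bullet> (matrix_pencil A \<eta> *v \<xi>))"
    using coeffs(3) by (simp add: W_def algebra_simps)
  show "\<theta>k 4 (\<xi>, \<eta>) = (\<xi> \<bullet> \<xi>)\<^sup>2 - 2 * (\<Sum>j\<in>UNIV. (\<xi> \<bullet> (A j *v \<xi>))\<^sup>2)"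
    using coeffs(5) by (simp add: S_def algebra_simps)
qed

lemma f_eq_without_theta3: "f = (\<lambda>x. f_without_theta3 A x + \<theta>k 3 (fst x, fst (snd x)))"
proof
  fix x :: "('p, 'q) split_space"
  obtain \<xi> \<eta> t where x: "x = (\<xi>, \<eta>, t)" by (cases x) auto
  have "\<theta> (\<xi>, \<eta>) = \<theta>k 0 (\<xi>, \<eta>) + \<theta>k 1 (\<xi>, \<eta>) + \<theta>k 2 (\<xi>, \<eta>) + \<theta>k 3 (\<xi>, \<eta>) + \<theta>k 4 (\<xi>, \<eta>)"
    by (simp add: theta_split atMost_Suc eval_nat_numeral algebra_simps)
  then show "f x = f_without_theta3 A x + \<theta>k 3 (fst x, fst (snd x))"
    unfolding f_eq_without_theta x
    by (simp add: f_without_theta3_def theta_components theta_components(2)[unfolded One_nat_def]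
        inner_matrix_pencil_pencil algebra_simps)
qed

lemma poly_on_lines_theta3_proj: "poly_on_lines (\<lambda>x::('p, 'q) split_space. \<theta>k 3 (fst x, fst (snd x)))"
proof -
  have "(\<lambda>x. \<theta>k 3 (fst x, fst (snd x))) = (\<lambda>x. f x - f_without_theta3 A x)"
    by (subst f_eq_without_theta3) simp
  then show ?thesis by (simp add: poly_on_lines_f)
qed

text \<open>\<open>\<theta>\<^sub>3\<close> is linear in \<open>\<eta>\<close> and does not depend on \<open>x\<^sub>n\<close>, so only its \<open>\<xi>\<close>-Laplacian survives.\<close>

lemma sum_dderiv2_theta3_proj:
  "(\<Sum>b\<in>Basis. dderiv2 (\<lambda>x::('p, 'q) split_space. \<theta>k 3 (fst x, fst (snd x))) b (\<xi>, \<eta>, t))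
     = laplacian (\<lambda>\<xi>'. \<theta>k 3 (\<xi>', \<eta>)) \<xi>"
proof -
  have "poly_on_lines (\<lambda>z. (\<lambda>x::('p, 'q) split_space. \<theta>k 3 (fst x, fst (snd x))) (0 + (fst z, snd z, 0)))"
    by (rule poly_on_lines_affine_compose[OF poly_on_lines_theta3_proj]) (rule linearI; simp)
  then have poly3: "poly_on_lines (\<theta>k 3)" by simp
  have proj: "dderiv2 (\<lambda>x::('p, 'q) split_space. \<theta>k 3 (fst x, fst (snd x))) v (\<xi>, \<eta>, t)
                = dderiv2 (\<theta>k 3) (fst v, fst (snd v)) (\<xi>, \<eta>)" for v
    using dderiv2_compose_affine[OF linear_fst_fst_snd, of "\<theta>k 3" 0 v "(\<xi>, \<eta>, t)"] by simp
  have xi: "dderiv2 (\<lambda>\<xi>'. \<theta>k 3 (\<xi>', \<eta>)) e \<xi> = dderiv2 (\<theta>k 3) (e, 0) (\<xi>, \<eta>)" for e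
    using dderiv2_compose_affine[of "\<lambda>y::real^'p. (y, 0::real^'q)" "\<theta>k 3" "(0, \<eta>)" e \<xi>]
    by (simp add: linearI)
  have eta: "dderiv2 (\<theta>k 3) (0, e) (\<xi>, \<eta>) = 0" for e
  proof -
    have lin: "linear (\<lambda>y::real^'q. (0::real^'p, y))" by (rule linearI) auto
    have "dderiv2 (\<theta>k 3) (0, e) (\<xi>, \<eta>) = dderiv2 (\<lambda>y. \<theta>k 3 ((\<xi>, 0) + (0, y))) e \<eta>"
      using dderiv2_compose_affine[OF lin, of "\<theta>k 3" "(\<xi>, 0)" e \<eta>] by simp
    also have "\<dots> = 0"
    proof (rule dderiv2_homogeneous1)
      show "poly_on_lines (\<lambda>y. \<theta>k 3 ((\<xi>, 0) + (0, y)))"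
        by (rule poly_on_lines_affine_compose[OF poly3 lin])
      show "\<theta>k 3 ((\<xi>, 0) + (0, c *\<^sub>R y)) = c * \<theta>k 3 ((\<xi>, 0) + (0, y))" for c y
        using theta_homogeneous_eta[of 3 \<xi> c y] by simp
    qed
    finally show ?thesis .
  qed
  show ?thesis
    unfolding sum_Basis_split_space laplacian_eq_sum_dderiv2 proj xi
    by (simp add: eta zero_prod_def[symmetric])
qed

section \<open>The Laplacian\<close>

lemma sum_dderiv2_f_without_theta3_xi:
  assumes trace_A: "\<And>i. trace (A i) = 0"
    and trace_pencil: "\<And>\<eta>. trace (matrix_pencil A \<eta> ** matrix_pencil A \<eta>) = 2 * real \<nu> * (\<eta> \<bullet> \<eta>)"
  shows "(\<Sum>e\<in>Basis. dderiv2 (f_without_theta3 A) (e, 0, 0) (\<xi>, \<eta>, t)) =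
     4*t\<^sup>2*real CARD('p) - 12*real CARD('p)*(\<eta> \<bullet> \<eta>) + 32 * real \<nu> * (\<eta> \<bullet> \<eta>)
     + 4*(\<xi> \<bullet> \<xi>)*real CARD('p) + 8*(\<xi> \<bullet> \<xi>) - 16 * (\<Sum>j\<in>UNIV. (A j *v \<xi>) \<bullet> (A j *v \<xi>))"
proof -
  have tr1: "(\<Sum>e\<in>(Basis::(real^'p) set). \<Sum>i\<in>UNIV. \<eta>$i*(e \<bullet> (A i *v e))) = 0"
    by (subst sum.swap) (simp add: sum_Basis_inner_matrix trace_A flip: sum_distrib_left)
  have tr2: "(\<Sum>e\<in>(Basis::(real^'p) set). \<Sum>j\<in>UNIV. 4*(\<xi> \<bullet> (A j *v \<xi>))*(e \<bullet> (A j *v e))) = 0"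
    by (subst sum.swap) (simp add: sum_Basis_inner_matrix trace_A mult.assoc flip: sum_distrib_left)
  have tr_square: "(\<Sum>e\<in>(Basis::(real^'p) set). \<Sum>i\<in>UNIV. \<Sum>k\<in>UNIV. \<eta>$i*\<eta>$k*((A i *v e) \<bullet> (A k *v e)))
      = 2 * real \<nu> * (\<eta> \<bullet> \<eta>)"
    using sum_Basis_norm_matrix_symmetric[OF transpose_matrix_pencil[OF A_sym, where \<eta> = \<eta>]] trace_pencil[of \<eta>]
    by (simp add: inner_matrix_pencil_pencil)
  have "(\<Sum>e\<in>(Basis::(real^'p) set). \<Sum>j\<in>UNIV. (\<xi> \<bullet> (A j *v e) + e \<bullet> (A j *v \<xi>))\<^sup>2)
          = (\<Sum>j\<in>UNIV. 4 * (\<Sum>e\<in>Basis. ((A j *v \<xi>) \<bullet> e)\<^sup>2))"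
    by (subst sum.swap) (simp add: inner_A_swap inner_commute[of _ "A _ *v \<xi>"] power2_eq_square sum_distrib_left)
  also have "\<dots> = 4 * (\<Sum>j\<in>UNIV. (A j *v \<xi>) \<bullet> (A j *v \<xi>))"
    by (simp add: sum_Basis_inner_square sum_distrib_left)
  finally show ?thesis
    unfolding dderiv2_f_without_theta3_xi
    by (simp add: sum.distrib sum_subtractf sum_Basis_inner_self sum_Basis_inner_square tr1 tr2 tr_square
        flip: sum_distrib_left sum_distrib_right)
qed

lemma laplacian_f:
  assumes "\<And>i. trace (A i) = 0"
    and "\<And>\<eta>. trace (matrix_pencil A \<eta> ** matrix_pencil A \<eta>) = 2 * real \<nu> * (\<eta> \<bullet> \<eta>)"
  shows "laplacian f (\<xi>, \<eta>, t) =
           4 * (real CARD('p) - 3 * real CARD('q) + 3) * (t\<^sup>2 + (norm \<xi>)\<^sup>2)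
           + 4 * (8 * real \<nu> - 1 + real CARD('q) - 3 * real CARD('p)) * (norm \<eta>)\<^sup>2
           + laplacian (\<lambda>\<xi>'. \<theta>k 3 (\<xi>', \<eta>)) \<xi>"
proof -
  have "dderiv2 f b (\<xi>, \<eta>, t) = dderiv2 (f_without_theta3 A) b (\<xi>, \<eta>, t)
          + dderiv2 (\<lambda>x. \<theta>k 3 (fst x, fst (snd x))) b (\<xi>, \<eta>, t)" for b
    by (subst f_eq_without_theta3) (simp add: poly_on_lines_theta3_proj)
  then have "laplacian f (\<xi>, \<eta>, t)
      = (\<Sum>b\<in>Basis. dderiv2 (f_without_theta3 A) b (\<xi>, \<eta>, t)) + laplacian (\<lambda>\<xi>'. \<theta>k 3 (\<xi>', \<eta>)) \<xi>"
    by (simp add: laplacian_eq_sum_dderiv2[of f] sum.distrib sum_dderiv2_theta3_proj)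
  also have "(\<Sum>b\<in>Basis. dderiv2 (f_without_theta3 A) b (\<xi>, \<eta>, t))
      = 4 * (real CARD('p) - 3 * real CARD('q) + 3) * (t\<^sup>2 + \<xi> \<bullet> \<xi>)
        + 4 * (8 * real \<nu> - 1 + real CARD('q) - 3 * real CARD('p)) * (\<eta> \<bullet> \<eta>)"
    unfolding sum_Basis_split_space sum_dderiv2_f_without_theta3_xi[OF assms]
      sum_dderiv2_f_without_theta3_eta dderiv2_f_without_theta3_t
    by (simp add: algebra_simps)
  finally show ?thesis by (simp add: power2_norm_eq_inner)
qed

end

theorem lemma3p4:
  fixes f :: "(real^('p::finite)) \<times> (real^('q::finite)) \<times> real \<Rightarrow> real"
    and \<theta> :: "(real^'p) \<times> (real^'q) \<Rightarrow> real"
    and \<theta>k :: "nat \<Rightarrow> (real^'p) \<times> (real^'q) \<Rightarrow> real"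
    and A :: "'q \<Rightarrow> real^'p^'p"
    and \<nu> :: nat
  assumes q2: "CARD('q) \<ge> 2"
    and A_sym: "\<And>i. transpose (A i) = A i"
    and A_sim: "\<And>\<eta>::real^'q. \<eta> \<noteq> 0 \<Longrightarrow>
                  sign_diag_similar \<nu> (norm \<eta>) (\<Sum>i\<in>UNIV. \<eta> $ i *\<^sub>R A i)"
    and theta_quartic: "homogeneous_quartic \<theta>"
    and f_def: "\<And>\<xi> \<eta> t. f (\<xi>, \<eta>, t) =
                  t ^ 4 + 2 * ((norm \<xi>)\<^sup>2 - 3 * (norm \<eta>)\<^sup>2) * t\<^sup>2
                  + 8 * (\<xi> \<bullet> ((\<Sum>i\<in>UNIV. \<eta> $ i *\<^sub>R A i) *v \<xi>)) * t + \<theta> (\<xi>, \<eta>)"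
    and grad: "\<And>x. grad_norm2 f x = 16 * (norm x) ^ 6"
    and theta_split: "\<And>\<xi> \<eta>. \<theta> (\<xi>, \<eta>) = (\<Sum>k\<le>4. \<theta>k k (\<xi>, \<eta>))"
    and theta_bihom: "\<And>k s t \<xi> \<eta>. k \<le> 4 \<Longrightarrow>
                  \<theta>k k (s *\<^sub>R \<xi>, t *\<^sub>R \<eta>) = s ^ k * t ^ (4 - k) * \<theta>k k (\<xi>, \<eta>)"
  shows "\<And>\<xi> \<eta> t. laplacian f (\<xi>, \<eta>, t) =
           4 * (real CARD('p) - 3 * real CARD('q) + 3) * (t\<^sup>2 + (norm \<xi>)\<^sup>2)
           + 4 * (8 * real \<nu> - 1 + real CARD('q) - 3 * real CARD('p)) * (norm \<eta>)\<^sup>2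
           + laplacian (\<lambda>\<xi>'. \<theta>k 3 (\<xi>', \<eta>)) \<xi>"
proof -
  have "eikonal_normal_form A \<theta> \<theta>k f"
    by unfold_locales
      (simp_all add: A_sym homogeneous_quartic_real_polynomial_function[OF theta_quartic]
        theta_split theta_bihom grad f_def matrix_pencil_def)
  then interpret eikonal_normal_form A \<theta> \<theta>k f .
  have pencil_sim: "\<eta> \<noteq> 0 \<Longrightarrow> sign_diag_similar \<nu> (norm \<eta>) (matrix_pencil A \<eta>)" for \<eta>
    using A_sim by (simp add: matrix_pencil_def)
  show "\<And>\<xi> \<eta> t. ?thesis \<xi> \<eta> t"
    by (rule laplacian_f[OF trace_matrix_pencil_basis[OF pencil_sim] trace_matrix_pencil_square[OF pencil_sim]])
qed

end
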